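(* Let $p$ be a prime, $h\in\mathbb{Z}$, $q\in\mathbb{C}_p$ with $|1-q|_p<p^{-\frac{1}{p-1}}$, let $d$ be a positive integer and $\chi$ a Dirichlet character with conductor $d$. Then for every integer $k\geq 0$, $$B_{k,q,\chi}^{(h)} = d^{k-1}\sum_{i=0}^{d-1}\chi(i)\, q^{hi}\, B_{k,q^d}^{(h)}\!\left(\frac{i}{d}\right).$$
   Context: $\mathbb{C}_p$ is the completion of an algebraic closure of $\mathbb{Q}_p$ with $|p|_p=p^{-1}$; for $x\in\mathbb{Z}_p$, $q^x:=\exp(x\log q)$. The generalized $(h,q)$-Bernoulli numbers attached to $\chi$ are $$B_{n,q,\chi}^{(h)} := \lim_{l\to\infty}\frac{1}{dp^l}\sum_{x=0}^{dp^l-1}\chi(x)\,q^{hx}\,x^n \qquad (n\ge 0),$$ (the Volkenborn integral $\int_X \chi(x)q^{hx}x^n\,d\mu_1(x)$ over $X=\varprojlim_N \mathbb{Z}/dp^N\mathbb{Z}$). The $(h,q)$-Bernoulli polynomials $B_{n,q}^{(h)}(x)$ are defined by the power series expansion in $t$ $$\frac{h\log q + t}{q^h e^t - 1}\, e^{xt} = \sum_{n=0}^\infty B_{n,q}^{(h)}(x)\frac{t^n}{n!},$$ and $B_{n,q^d}^{(h)}(x)$ is the same with $q$ replaced by $q^d$. *)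

theory Defs
  imports "HOL-Computational_Algebra.Computational_Algebra" "HOL-Number_Theory.Number_Theory"
begin

definition conv_abs :: "('a::field \<Rightarrow> real) \<Rightarrow> (nat \<Rightarrow> 'a) \<Rightarrow> 'a \<Rightarrow> bool" where
  "conv_abs absp f L \<longleftrightarrow> (\<forall>\<epsilon>>0. \<exists>N. \<forall>n\<ge>N. absp (f n - L) < \<epsilon>)"

(* The field 'a with absolute value absp is (isometrically) C_p:
   a non-archimedean absolute value with |p| = 1/p, complete, algebraically closed,
   and the algebraic numbers are dense (so 'a is the completion of an algebraic
   closure of Q_p). *)
definition is_Cp :: "nat \<Rightarrow> ('a::field_char_0 \<Rightarrow> real) \<Rightarrow> bool" where
  "is_Cp p absp \<longleftrightarrow>
     (\<forall>x. absp x \<ge> 0) \<and> (\<forall>x. absp x = 0 \<longleftrightarrow> x = 0) \<and>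
     (\<forall>x y. absp (x * y) = absp x * absp y) \<and>
     (\<forall>x y. absp (x + y) \<le> max (absp x) (absp y)) \<and>
     absp (of_nat p) = 1 / real p \<and>
     (\<forall>f. (\<forall>\<epsilon>>0. \<exists>N. \<forall>m\<ge>N. \<forall>n\<ge>N. absp (f m - f n) < \<epsilon>) \<longrightarrow> (\<exists>L. conv_abs absp f L)) \<and>
     (\<forall>P::'a poly. degree P > 0 \<longrightarrow> (\<exists>x. poly P x = 0)) \<and>
     (\<forall>x. \<forall>\<epsilon>>0. \<exists>y. algebraic y \<and> absp (x - y) < \<epsilon>)"

definition logp :: "('a::field_char_0 \<Rightarrow> real) \<Rightarrow> 'a \<Rightarrow> 'a" where
  "logp absp q = (THE L. conv_abs absp
      (\<lambda>N. \<Sum>n<N. (-1) ^ n * (q - 1) ^ (n + 1) / of_nat (n + 1)) L)"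

definition hq_bernpoly :: "('a::field_char_0 \<Rightarrow> real) \<Rightarrow> int \<Rightarrow> 'a \<Rightarrow> nat \<Rightarrow> 'a \<Rightarrow> 'a" where
  "hq_bernpoly absp h q n x =
     fact n * fps_nth
       ((fps_const (of_int h * logp absp q) + fps_X) /
          (fps_const (q powi h) * fps_exp 1 - 1) * fps_exp x) n"

definition dirichlet_char :: "nat \<Rightarrow> (nat \<Rightarrow> 'a::field) \<Rightarrow> bool" where
  "dirichlet_char d \<chi> \<longleftrightarrow> d > 0 \<and> \<chi> 1 = 1 \<and>
     (\<forall>a b. \<chi> (a * b) = \<chi> a * \<chi> b) \<and> (\<forall>a. \<chi> (a + d) = \<chi> a) \<and>
     (\<forall>a. \<chi> a \<noteq> 0 \<longleftrightarrow> coprime a d)"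

definition has_conductor :: "(nat \<Rightarrow> 'a::field) \<Rightarrow> nat \<Rightarrow> bool" where
  "has_conductor \<chi> d \<longleftrightarrow> dirichlet_char d \<chi> \<and>
     (\<forall>f. f dvd d \<and> (\<forall>a b. coprime a d \<and> coprime b d \<and> [a = b] (mod f) \<longrightarrow> \<chi> a = \<chi> b)
        \<longrightarrow> f = d)"

(* the Riemann-type sums whose limit (l \<rightarrow> \<infinity>) defines B^{(h)}_{n,q,\<chi>} *)
definition volk_sum :: "nat \<Rightarrow> nat \<Rightarrow> (nat \<Rightarrow> 'a::field_char_0) \<Rightarrow> int \<Rightarrow> 'a \<Rightarrow> nat \<Rightarrow> nat \<Rightarrow> 'a" where
  "volk_sum p d \<chi> h q n l =
     (1 / of_nat (d * p ^ l)) * (\<Sum>x<d * p ^ l. \<chi> x * q powi (h * int x) * of_nat x ^ n)"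

end

theory Submission
  imports Defs
begin

text \<open>
  Split x < d p^l into residue classes x = i + d y with i < d and y < M = p^l. As \<chi> has
  period d, the Riemann sum becomes d^(k-1) \<Sum>_i \<chi>(i) q^(hi) times k! times the t^k-coefficient
  of F_M(t) e^(it/d), where F_M(t) = (1/M) \<Sum>_{y<M} Q^y e^(yt) and Q = q^(dh). Summing the
  geometric series gives (Q e^t - 1) F_M(t) = (Q^M e^(Mt) - 1)/M. As l \<rightarrow> \<infinity>, M \<rightarrow> 0 p-adically
  and (Q^M - 1)/M \<rightarrow> h log q^d, so the right-hand side tends coefficientwise to h log q^d + t
  and F_M to the generating function of the (h,q^d)-Bernoulli polynomials.
  The limit (r^M - 1)/M \<rightarrow> log r comes from the binomial theorem: the n-th term of
  ((1 + u)^M - 1)/M is the n-th term of the logarithm series times \<Prod>_{i\<le>n} (1 - M/i),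
  and |M/i| \<le> n p^-l.
\<close>

lemma tendsto_square_times_power_zero:
  fixes \<rho> :: real
  assumes "0 \<le> \<rho>" "\<rho> < 1"
  shows "(\<lambda>k. real k ^ 2 * \<rho> ^ k) \<longlonglongrightarrow> 0"
proof -
  have s: "norm (sqrt \<rho>) < 1" using assms by simp
  have "(\<lambda>k. (real k * sqrt \<rho> ^ k) * (real k * sqrt \<rho> ^ k)) \<longlonglongrightarrow> 0"
    using tendsto_mult_zero[OF powser_times_n_limit_0[OF s] powser_times_n_limit_0[OF s]] by simp
  moreover have "(real k * sqrt \<rho> ^ k) * (real k * sqrt \<rho> ^ k) = real k ^ 2 * \<rho> ^ k" for k
    using assms by (simp add: power2_eq_square power_mult_distrib[symmetric] algebra_simps)
  ultimately show ?thesis by simp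
qed

lemma binomial_Suc_div_eq_prod:
  assumes "M > 0"
  shows "(of_nat (M choose Suc n) :: 'a::field_char_0) / of_nat M =
    (-1) ^ n / of_nat (Suc n) * (\<Prod>i\<in>{1..n}. 1 - of_nat M / of_nat i)"
proof (induction n)
  case 0
  then show ?case using assms by simp
next
  case (Suc n)
  have "(of_nat M gchoose Suc (Suc n) :: 'a) =
      (of_nat M gchoose Suc n) * ((of_nat M - of_nat (Suc n)) / of_nat (Suc (Suc n)))"
    by (simp add: gbinomial_Suc prod.cl_ivl_Suc field_simps del: of_nat_Suc)
  then have "(of_nat (M choose Suc (Suc n)) :: 'a) / of_nat M =
      of_nat (M choose Suc n) / of_nat M * ((of_nat M - of_nat (Suc n)) / of_nat (Suc (Suc n)))"
    by (simp add: binomial_gbinomial del: of_nat_Suc)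
  also have "\<dots> = (-1) ^ Suc n / of_nat (Suc (Suc n)) * (\<Prod>i\<in>{1..Suc n}. 1 - of_nat M / of_nat i)"
    unfolding Suc.IH by (simp add: prod.cl_ivl_Suc field_simps del: of_nat_Suc)
  finally show ?case .
qed

lemma power_minus_one_div_eq_sum:
  fixes u :: "'a::field_char_0"
  assumes "M > 0"
  shows "((1 + u) ^ M - 1) / of_nat M =
    (\<Sum>n<M. (-1) ^ n * u ^ Suc n / of_nat (Suc n) * (\<Prod>i\<in>{1..n}. 1 - of_nat M / of_nat i))"
proof -
  have "(1 + u) ^ M = (\<Sum>k<Suc M. of_nat (M choose k) * u ^ k)"
    using binomial_ring[of u 1 M] by (simp add: add.commute lessThan_Suc_atMost)
  also have "\<dots> = 1 + (\<Sum>n<M. of_nat (M choose Suc n) * u ^ Suc n)"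
    by (simp only: sum.lessThan_Suc_shift) simp
  finally have "((1 + u) ^ M - 1) / of_nat M = (\<Sum>n<M. of_nat (M choose Suc n) / of_nat M * u ^ Suc n)"
    by (simp add: sum_divide_distrib)
  then show ?thesis
    by (simp add: binomial_Suc_div_eq_prod[OF assms] mult_ac)
qed

lemma sum_lessThan_mult_residues:
  fixes f :: "nat \<Rightarrow> 'b::comm_monoid_add"
  shows "(\<Sum>x<d * M. f x) = (\<Sum>i<d. \<Sum>y<M. f (i + d * y))"
proof -
  have "(\<Sum>x<d * M. f x) = (\<Sum>y<M. \<Sum>x\<in>{y * d..<y * d + d}. f x)"
    using sum.nat_group[of f d M] by (simp add: mult.commute)
  also have "\<dots> = (\<Sum>y<M. \<Sum>i<d. f (i + d * y))"
    using sum.shift_bounds_nat_ivl[of f 0 "y * d" d for y]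
    by (simp add: atLeast0LessThan add.commute mult.commute)
  finally show ?thesis by (rule trans[OF _ sum.swap])
qed

lemma fps_exp_geometric_sum:
  fixes Q :: "'a::field_char_0"
  shows "(fps_const Q * fps_exp 1 - 1) * (\<Sum>y<M. fps_const (Q ^ y) * fps_exp (of_nat y)) =
    fps_const (Q ^ M) * fps_exp (of_nat M) - 1"
proof -
  define g where "g y = fps_const (Q ^ y) * fps_exp (of_nat y :: 'a)" for y
  have "(fps_const Q * fps_exp 1 - 1) * g y = g (Suc y) - g y" for y
    by (simp add: g_def fps_exp_add_mult algebra_simps flip: fps_const_mult)
  then have "(fps_const Q * fps_exp 1 - 1) * (\<Sum>y<M. g y) = g M - g 0"
    by (simp add: sum_distrib_left sum_lessThan_telescope)
  then show ?thesis by (simp add: g_def)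
qed

definition riemann_fps :: "'a::field_char_0 \<Rightarrow> nat \<Rightarrow> 'a fps" where
  "riemann_fps Q M = fps_const (1 / of_nat M) * (\<Sum>y<M. fps_const (Q ^ y) * fps_exp (of_nat y))"

lemma riemann_fps_times_exp_nth:
  "fact k * (riemann_fps Q M * fps_exp a) $ k = (\<Sum>y<M. Q ^ y * (of_nat y + a) ^ k) / of_nat M"
proof -
  have "riemann_fps Q M * fps_exp a =
      fps_const (1 / of_nat M) * (\<Sum>y<M. fps_const (Q ^ y) * fps_exp (of_nat y + a))"
    by (simp add: riemann_fps_def sum_distrib_right fps_exp_add_mult mult.assoc)
  then show ?thesis by (simp add: fps_sum_nth sum_distrib_left sum_divide_distrib)
qed

lemma riemann_fps_eq_divide:
  assumes "Q \<noteq> 0"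
  shows "riemann_fps Q M =
    fps_const (1 / of_nat M) * (fps_const (Q ^ M) * fps_exp (of_nat M) - 1) / (fps_const Q * fps_exp 1 - 1)"
proof -
  define D where "D = fps_const Q * fps_exp 1 - (1 :: 'a fps)"
  have "D $ 1 = Q" by (simp add: D_def)
  then have "D \<noteq> 0" using assms by auto
  moreover have "D * riemann_fps Q M = fps_const (1 / of_nat M) * (fps_const (Q ^ M) * fps_exp (of_nat M) - 1)"
    unfolding riemann_fps_def D_def by (simp only: mult.left_commute fps_exp_geometric_sum)
  ultimately show ?thesis by (metis D_def nonzero_mult_div_cancel_left)
qed

lemma volk_sum_eq_riemann_fps:
  fixes \<chi> :: "nat \<Rightarrow> 'a::field_char_0"
  assumes "d > 0" and periodic: "\<And>a. \<chi> (a + d) = \<chi> a" and "q \<noteq> 0"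
  shows "volk_sum p d \<chi> h q k l = of_nat d powi (int k - 1) *
    (\<Sum>i<d. \<chi> i * q powi (h * int i) *
       (fact k * (riemann_fps ((q ^ d) powi h) (p ^ l) * fps_exp (of_nat i / of_nat d)) $ k))"
proof -
  define Q where "Q = (q ^ d) powi h"
  define a where "a i = (of_nat i / of_nat d :: 'a)" for i
  have \<chi>: "\<chi> (i + d * y) = \<chi> i" for i y
  proof (induction y)
    case (Suc y)
    then show ?case using periodic[of "i + d * y"] by (simp add: algebra_simps)
  qed simp
  have q_powi: "q powi (h * int (i + d * y)) = q powi (h * int i) * Q ^ y" for i y
    using \<open>q \<noteq> 0\<close>
    by (simp add: Q_def power_int_add power_int_power power_int_power' algebra_simps)
  have x_power: "(of_nat (i + d * y) :: 'a) ^ k = of_nat d ^ k * (of_nat y + a i) ^ k" for i y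
    using \<open>d > 0\<close> by (simp add: a_def field_simps flip: power_mult_distrib)
  have "(\<Sum>x<d * p ^ l. \<chi> x * q powi (h * int x) * of_nat x ^ k) =
      (\<Sum>i<d. \<chi> i * q powi (h * int i) * of_nat d ^ k * (\<Sum>y<p ^ l. Q ^ y * (of_nat y + a i) ^ k))"
    unfolding sum_lessThan_mult_residues[where d = d] \<chi> q_powi x_power
    by (simp add: sum_distrib_left mult_ac)
  moreover have "(of_nat d :: 'a) powi (int k - 1) = of_nat d ^ k / of_nat d"
    using \<open>d > 0\<close> by (simp add: power_int_diff)
  ultimately show ?thesis
    unfolding volk_sum_def riemann_fps_times_exp_nth Q_def[symmetric] a_def[symmetric]
    by (simp add: sum_distrib_left sum_divide_distrib field_simps)
qed

locale nonarch_abs =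
  fixes absp :: "'a::field_char_0 \<Rightarrow> real"
  assumes nonneg: "absp x \<ge> 0"
    and zero_iff: "absp x = 0 \<longleftrightarrow> x = 0"
    and mult: "absp (x * y) = absp x * absp y"
    and ultra: "absp (x + y) \<le> max (absp x) (absp y)"
begin

lemma abs_0 [simp]: "absp 0 = 0"
  using zero_iff by simp

lemma abs_1 [simp]: "absp 1 = 1"
proof -
  have "absp 1 * absp 1 = absp 1" using mult[of 1 1] by simp
  moreover have "absp 1 \<noteq> 0" using zero_iff by simp
  ultimately show ?thesis by simp
qed

lemma abs_minus [simp]: "absp (- x) = absp x"
proof -
  have "absp (-1) * absp (-1) = 1" using mult[of "-1" "-1"] by simp
  then have "absp (-1) = 1" using nonneg[of "-1"] by (auto simp: square_eq_1_iff)
  then show ?thesis using mult[of "-1" x] by simp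
qed

lemma abs_minus_commute: "absp (x - y) = absp (y - x)"
  by (metis abs_minus minus_diff_eq)

lemma abs_triangle: "absp (x + y) \<le> absp x + absp y"
  using ultra[of x y] nonneg[of x] nonneg[of y] by linarith

lemma abs_power: "absp (x ^ n) = absp x ^ n"
  by (induction n) (simp_all add: mult)

lemma abs_divide: "absp (x / y) = absp x / absp y"
proof (cases "y = 0")
  case False
  then have "absp (x / y) * absp y = absp x" by (simp flip: mult)
  moreover have "absp y \<noteq> 0" using False zero_iff by simp
  ultimately show ?thesis by (simp add: eq_divide_eq)
qed simp

lemma abs_of_nat_le_1: "absp (of_nat n) \<le> 1"
proof (induction n)
  case (Suc n)
  have "absp (1 + of_nat n) \<le> max (absp 1) (absp (of_nat n))" by (rule ultra)
  with Suc show ?case by simp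
qed simp

lemma abs_of_int_le_1: "absp (of_int n) \<le> 1"
  by (cases n rule: int_cases) (simp_all add: abs_of_nat_le_1 del: of_nat_Suc)

lemma abs_sum_le:
  assumes "\<And>i. i \<in> A \<Longrightarrow> absp (f i) \<le> B" "B \<ge> 0"
  shows "absp (\<Sum>i\<in>A. f i) \<le> B"
proof (cases "finite A")
  case True
  then show ?thesis using assms
  proof (induction A rule: finite_induct)
    case (insert x F)
    have "absp (f x + sum f F) \<le> B"
      by (intro order_trans[OF ultra] max.boundedI) (simp_all add: insert)
    with insert.hyps show ?case by simp
  qed simp
qed (use assms in simp)

lemma abs_prod_one_minus_le:
  assumes "\<And>i. i \<in> A \<Longrightarrow> absp (x i) \<le> B" "0 \<le> B" "B \<le> 1"
  shows "absp ((\<Prod>i\<in>A. 1 - x i) - 1) \<le> B"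
proof (cases "finite A")
  case True
  then show ?thesis using assms
  proof (induction A rule: finite_induct)
    case empty
    then show ?case by simp
  next
    case (insert y F)
    let ?P = "\<Prod>i\<in>F. 1 - x i"
    have "absp (1 - x y) \<le> 1"
      using ultra[of 1 "- x y"] insert.prems(1)[of y] insert.prems(3) by simp
    then have "absp ((?P - 1) * (1 - x y)) \<le> B"
      using insert by (simp add: mult) (meson mult_left_le nonneg order_trans)
    moreover have "(\<Prod>i\<in>insert y F. 1 - x i) - 1 = (?P - 1) * (1 - x y) + (- x y)"
      using insert.hyps by (simp add: algebra_simps)
    ultimately show ?case
      using ultra[of "(?P - 1) * (1 - x y)" "- x y"] insert.prems(1)[of y] by simp
  qed
qed (use assms in simp)

lemma abs_power_minus_one_le:
  assumes "absp x \<le> 1"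
  shows "absp (x ^ n - 1) \<le> absp (x - 1)"
proof -
  have "x ^ n - 1 = (x - 1) * (\<Sum>i<n. x ^ i)"
    by (simp add: power_diff_1_eq)
  moreover have "absp (\<Sum>i<n. x ^ i) \<le> 1"
    using assms by (intro abs_sum_le) (simp_all add: abs_power power_le_one nonneg)
  ultimately show ?thesis using nonneg by (simp add: mult mult_left_le)
qed

lemma conv_abs_iff: "conv_abs absp f L \<longleftrightarrow> (\<lambda>n. absp (f n - L)) \<longlonglongrightarrow> 0"
  unfolding conv_abs_def LIMSEQ_iff using nonneg by simp

lemma conv_abs_bound:
  assumes "\<forall>\<^sub>F n in sequentially. absp (f n - L) \<le> g n" "g \<longlonglongrightarrow> 0"
  shows "conv_abs absp f L"
  unfolding conv_abs_iff by (rule tendsto_sandwich[of "\<lambda>_. 0" _ _ g]) (use assms nonneg in auto)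

lemma conv_abs_const: "conv_abs absp (\<lambda>n. c) c"
  unfolding conv_abs_iff by simp

lemma conv_abs_add:
  assumes "conv_abs absp f a" "conv_abs absp g b"
  shows "conv_abs absp (\<lambda>n. f n + g n) (a + b)"
proof (rule conv_abs_bound)
  show "\<forall>\<^sub>F n in sequentially. absp (f n + g n - (a + b)) \<le> absp (f n - a) + absp (g n - b)"
    by (intro always_eventually allI) (simp add: add_diff_add abs_triangle)
  show "(\<lambda>n. absp (f n - a) + absp (g n - b)) \<longlonglongrightarrow> 0"
    using assms unfolding conv_abs_iff by (rule tendsto_add_zero)
qed

lemma conv_abs_mult:
  assumes "conv_abs absp f a" "conv_abs absp g b"
  shows "conv_abs absp (\<lambda>n. f n * g n) (a * b)"
proof (rule conv_abs_bound)
  show "\<forall>\<^sub>F n in sequentially. absp (f n * g n - a * b) \<le>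
      absp (f n - a) * absp (g n - b) + (absp a * absp (g n - b) + absp b * absp (f n - a))"
  proof (intro always_eventually allI)
    fix n
    have "f n * g n - a * b = (f n - a) * (g n - b) + (a * (g n - b) + b * (f n - a))"
      by (simp add: algebra_simps)
    also have "absp \<dots> \<le> absp ((f n - a) * (g n - b)) + (absp (a * (g n - b)) + absp (b * (f n - a)))"
      by (intro order_trans[OF abs_triangle] add_mono order_refl abs_triangle)
    finally show "absp (f n * g n - a * b) \<le>
        absp (f n - a) * absp (g n - b) + (absp a * absp (g n - b) + absp b * absp (f n - a))"
      by (simp add: mult)
  qed
  show "(\<lambda>n. absp (f n - a) * absp (g n - b) + (absp a * absp (g n - b) + absp b * absp (f n - a)))
      \<longlonglongrightarrow> 0"
    using assms unfolding conv_abs_iff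
    by (intro tendsto_add_zero tendsto_mult_zero tendsto_mult_right_zero)
qed

lemma conv_abs_minus: "conv_abs absp f a \<Longrightarrow> conv_abs absp (\<lambda>n. - f n) (- a)"
  using conv_abs_mult[OF conv_abs_const[of "-1"]] by simp

lemma conv_abs_power: "conv_abs absp f a \<Longrightarrow> conv_abs absp (\<lambda>n. f n ^ j) (a ^ j)"
  by (induction j) (simp_all add: conv_abs_const conv_abs_mult)

lemma conv_abs_sum:
  assumes "\<And>i. i \<in> A \<Longrightarrow> conv_abs absp (f i) (L i)"
  shows "conv_abs absp (\<lambda>n. \<Sum>i\<in>A. f i n) (\<Sum>i\<in>A. L i)"
proof (cases "finite A")
  case True
  then show ?thesis using assms
    by (induction A rule: finite_induct) (simp_all add: conv_abs_const conv_abs_add)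
qed (simp add: conv_abs_const)

lemma conv_abs_unique:
  assumes "conv_abs absp f a" "conv_abs absp f b"
  shows "a = b"
proof -
  have lim: "(\<lambda>n. absp (f n - b) + absp (f n - a)) \<longlonglongrightarrow> 0"
    using assms unfolding conv_abs_iff by (intro tendsto_add_zero)
  have bound: "absp (a - b) \<le> absp (f n - b) + absp (f n - a)" for n
    using abs_triangle[of "f n - b" "a - f n"] abs_minus_commute[of a "f n"] by simp
  have "(\<lambda>n. absp (a - b)) \<longlonglongrightarrow> 0"
    by (rule tendsto_sandwich[OF _ _ tendsto_const lim]; intro always_eventually allI nonneg bound)
  then have "absp (a - b) = 0" by (simp add: LIMSEQ_const_iff)
  then show ?thesis using zero_iff by simp
qed

lemma conv_abs_subseq:
  assumes "conv_abs absp f a" "\<And>l. g l \<ge> l"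
  shows "conv_abs absp (\<lambda>l. f (g l)) a"
  unfolding conv_abs_def
proof (intro allI impI)
  fix e :: real
  assume "e > 0"
  then obtain N where "\<forall>n\<ge>N. absp (f n - a) < e"
    using assms(1) unfolding conv_abs_def by blast
  then show "\<exists>N. \<forall>l\<ge>N. absp (f (g l) - a) < e"
    using assms(2) le_trans by blast
qed

lemma conv_abs_one_if_diff_quot:
  assumes "conv_abs absp (\<lambda>l. (x l - 1) / m l) L" "conv_abs absp m 0" "\<And>l. m l \<noteq> 0"
  shows "conv_abs absp x 1"
proof -
  have "conv_abs absp (\<lambda>l. m l * ((x l - 1) / m l) + 1) (0 * L + 1)"
    by (intro conv_abs_add conv_abs_mult assms(1,2) conv_abs_const)
  then show ?thesis using assms(3) by simp
qed

lemma conv_abs_diff_quot_power: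
  assumes "conv_abs absp (\<lambda>l. (x l - 1) / m l) L" "conv_abs absp m 0" "\<And>l. m l \<noteq> 0"
  shows "conv_abs absp (\<lambda>l. (x l ^ n - 1) / m l) (of_nat n * L)"
proof (induction n)
  case 0
  then show ?case using conv_abs_const[of 0] by simp
next
  case (Suc n)
  have "conv_abs absp (\<lambda>l. x l * ((x l ^ n - 1) / m l) + (x l - 1) / m l) (1 * (of_nat n * L) + L)"
    by (intro conv_abs_add conv_abs_mult conv_abs_one_if_diff_quot[OF assms] Suc assms(1))
  moreover have "x l * ((x l ^ n - 1) / m l) + (x l - 1) / m l = (x l ^ Suc n - 1) / m l" for l
    using assms(3)[of l] by (simp add: field_simps)
  ultimately show ?case by (simp add: algebra_simps)
qed

lemma conv_abs_inverse_one:
  assumes "conv_abs absp x 1"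
  shows "conv_abs absp (\<lambda>l. inverse (x l)) 1"
proof (rule conv_abs_bound)
  obtain N where N: "\<forall>n\<ge>N. absp (x n - 1) < 1"
    using assms unfolding conv_abs_def by force
  show "\<forall>\<^sub>F l in sequentially. absp (inverse (x l) - 1) \<le> absp (x l - 1)"
    unfolding eventually_sequentially
  proof (intro exI allI impI)
    fix n
    assume "n \<ge> N"
    then have "absp (x n - 1) < 1" using N by blast
    then have "absp (x n) = 1"
      using ultra[of "x n - 1" 1] ultra[of "1 - x n" "x n"] abs_minus_commute[of "x n" 1] by simp
    moreover from this have "x n \<noteq> 0" by auto
    then have "inverse (x n) - 1 = (1 - x n) / x n" by (simp add: field_simps)
    ultimately show "absp (inverse (x n) - 1) \<le> absp (x n - 1)"
      by (simp add: abs_divide abs_minus_commute)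
  qed
  show "(\<lambda>l. absp (x l - 1)) \<longlonglongrightarrow> 0"
    using assms unfolding conv_abs_iff .
qed

lemma conv_abs_diff_quot_inverse:
  assumes "conv_abs absp (\<lambda>l. (x l - 1) / m l) L" "conv_abs absp m 0" "\<And>l. m l \<noteq> 0"
    and "\<And>l. x l \<noteq> 0"
  shows "conv_abs absp (\<lambda>l. (inverse (x l) - 1) / m l) (- L)"
proof -
  have "conv_abs absp (\<lambda>l. - ((x l - 1) / m l) * inverse (x l)) (- L * 1)"
    by (intro conv_abs_mult conv_abs_minus assms(1) conv_abs_inverse_one
        conv_abs_one_if_diff_quot[OF assms(1-3)])
  moreover have "- ((x l - 1) / m l) * inverse (x l) = (inverse (x l) - 1) / m l" for l
    using assms(3,4)[of l] by (simp add: field_simps)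
  ultimately show ?thesis by simp
qed

lemma conv_abs_diff_quot_powi:
  assumes "conv_abs absp (\<lambda>l. (x l - 1) / m l) L" "conv_abs absp m 0" "\<And>l. m l \<noteq> 0"
    and "\<And>l. x l \<noteq> 0"
  shows "conv_abs absp (\<lambda>l. (x l powi h - 1) / m l) (of_int h * L)"
proof (cases "h \<ge> 0")
  case True
  then show ?thesis
    using conv_abs_diff_quot_power[OF assms(1-3), of "nat h"] by (simp add: power_int_def)
next
  case False
  then show ?thesis
    using conv_abs_diff_quot_power[OF conv_abs_diff_quot_inverse[OF assms] assms(2,3), of "nat (- h)"]
    by (simp add: power_int_def)
qed

definition conv_fps :: "(nat \<Rightarrow> 'a fps) \<Rightarrow> 'a fps \<Rightarrow> bool" where
  "conv_fps A B \<longleftrightarrow> (\<forall>n. conv_abs absp (\<lambda>l. A l $ n) (B $ n))"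

lemma conv_fps_mult_right: "conv_fps A B \<Longrightarrow> conv_fps (\<lambda>l. A l * E) (B * E)"
  unfolding conv_fps_def fps_mult_nth by (auto intro!: conv_abs_sum conv_abs_mult conv_abs_const)

text \<open>No hypothesis on D is needed: division by D is multiplication by a fixed series
  followed by a fixed shift of coefficients.\<close>

lemma conv_fps_divide_right: "conv_fps A B \<Longrightarrow> conv_fps (\<lambda>l. A l / D) (B / D)"
  unfolding fps_divide_def conv_fps_def fps_shift_nth
  using conv_fps_mult_right[unfolded conv_fps_def] by blast

lemma conv_fps_exp_diff_quot:
  assumes "conv_abs absp (\<lambda>l. (x l - 1) / m l) L" "conv_abs absp m 0" "\<And>l. m l \<noteq> 0"
  shows "conv_fps (\<lambda>l. fps_const (1 / m l) * (fps_const (x l) * fps_exp (m l) - 1))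
    (fps_const L + fps_X)"
  unfolding conv_fps_def
proof
  fix n
  show "conv_abs absp (\<lambda>l. (fps_const (1 / m l) * (fps_const (x l) * fps_exp (m l) - 1)) $ n)
      ((fps_const L + fps_X) $ n)"
  proof (cases n)
    case 0
    then show ?thesis using assms(1) by simp
  next
    case (Suc j)
    have "conv_abs absp (\<lambda>l. x l * m l ^ j * (1 / fact n)) (1 * 0 ^ j * (1 / fact n))"
      by (intro conv_abs_mult conv_abs_power conv_abs_const assms(2)
          conv_abs_one_if_diff_quot[OF assms])
    moreover have "(fps_const (1 / m l) * (fps_const (x l) * fps_exp (m l) - 1)) $ n =
        x l * m l ^ j * (1 / fact n)" for l
      using Suc assms(3)[of l] by (simp add: algebra_simps)
    ultimately show ?thesis using Suc by (cases j) simp_all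
  qed
qed

end

locale complete_nonarch_abs = nonarch_abs +
  assumes complete:
    "\<And>f. \<forall>\<epsilon>>0. \<exists>N. \<forall>m\<ge>N. \<forall>n\<ge>N. absp (f m - f n) < \<epsilon> \<Longrightarrow> \<exists>L. conv_abs absp f L"
begin

lemma conv_abs_partial_sums:
  assumes "(\<lambda>n. absp (a n)) \<longlonglongrightarrow> 0"
  shows "\<exists>L. conv_abs absp (\<lambda>N. \<Sum>n<N. a n) L"
proof (rule complete, intro allI impI)
  fix e :: real
  assume "e > 0"
  then obtain N where N: "\<And>n. n \<ge> N \<Longrightarrow> absp (a n) < e / 2"
    using assms[unfolded LIMSEQ_iff, rule_format, of "e / 2"] nonneg by auto
  have tail: "absp ((\<Sum>n<M. a n) - (\<Sum>n<M'. a n)) < e" if "N \<le> M'" "M' \<le> M" for M M'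
  proof -
    have "(\<Sum>n<M. a n) - (\<Sum>n<M'. a n) = (\<Sum>n\<in>{M'..<M}. a n)"
      using that by (simp add: sum_diff_nat_ivl lessThan_atLeast0)
    also have "absp \<dots> \<le> e / 2"
    proof (rule abs_sum_le)
      fix n
      assume "n \<in> {M'..<M}"
      with that show "absp (a n) \<le> e / 2" by (intro less_imp_le[OF N]) simp
    qed (use \<open>e > 0\<close> in simp)
    finally show ?thesis using \<open>e > 0\<close> by simp
  qed
  show "\<exists>N. \<forall>M\<ge>N. \<forall>M'\<ge>N. absp ((\<Sum>n<M. a n) - (\<Sum>n<M'. a n)) < e"
    using tail abs_minus_commute by (metis nat_le_linear)
qed

end

locale padic_abs = complete_nonarch_abs +
  fixes p :: nat
  assumes prime: "prime p" and abs_of_nat_p: "absp (of_nat p) = 1 / real p"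
begin

lemma p_gt_1: "p > 1"
  using prime prime_gt_1_nat by blast

lemma abs_of_nat_coprime:
  assumes "\<not> p dvd n"
  shows "absp (of_nat n) = 1"
proof -
  have "coprime (int p) (int n)"
    using assms prime by (simp add: prime_imp_coprime)
  then obtain u v :: int where "u * int p + v * int n = 1"
    by (metis bezout_int coprime_iff_gcd_eq_1)
  then have "(1::'a) = of_int u * of_nat p + of_int v * of_nat n"
    by (metis of_int_1 of_int_add of_int_mult of_int_of_nat_eq)
  then have "1 \<le> max (absp (of_int u) * absp (of_nat p)) (absp (of_int v) * absp (of_nat n))"
    using ultra by (metis abs_1 mult)
  moreover have "absp (of_int u) * absp (of_nat p) \<le> 1 / real p"
    unfolding abs_of_nat_p by (rule mult_left_le_one_le) (simp_all add: nonneg abs_of_int_le_1)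
  moreover have "absp (of_int v) * absp (of_nat n) \<le> absp (of_nat n)"
    by (rule mult_left_le_one_le) (simp_all add: nonneg abs_of_int_le_1)
  moreover have "1 / real p < 1"
    using p_gt_1 by simp
  ultimately show ?thesis
    using abs_of_nat_le_1[of n] by (auto simp: le_max_iff_disj)
qed

lemma abs_of_nat_ge: "n > 0 \<Longrightarrow> 1 / real n \<le> absp (of_nat n)"
proof (induction n rule: less_induct)
  case (less n)
  show ?case
  proof (cases "p dvd n")
    case True
    then obtain m where m: "n = p * m" by auto
    with less.prems p_gt_1 have "0 < m" "m < n" by auto
    then have "1 / real m \<le> absp (of_nat m)" using less.IH by blast
    then have "1 / real m / real p \<le> absp (of_nat m) / real p"
      by (rule divide_right_mono) simp
    then show ?thesis using m by (simp add: mult abs_of_nat_p mult.commute)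
  qed (use less.prems in \<open>simp add: abs_of_nat_coprime\<close>)
qed

lemma abs_inverse_of_nat_le:
  assumes "n > 0"
  shows "absp (1 / of_nat n) \<le> real n"
proof -
  have "absp (1 / of_nat n) = 1 / absp (of_nat n)" by (simp add: abs_divide)
  also have "\<dots> \<le> 1 / (1 / real n)"
  proof (rule divide_left_mono)
    show "1 / real n \<le> absp (of_nat n)" using abs_of_nat_ge[OF assms] .
    moreover have "0 < 1 / real n" using assms by simp
    ultimately have "0 < absp (of_nat n)" by linarith
    with assms show "0 < absp (of_nat n) * (1 / real n)" by simp
  qed simp
  finally show ?thesis by simp
qed

lemma abs_of_nat_ppow: "absp (of_nat (p ^ l)) = 1 / real p ^ l"
  by (simp add: abs_power abs_of_nat_p power_one_over)

lemma conv_abs_ppow: "conv_abs absp (\<lambda>l. of_nat (p ^ l)) 0"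
  by (rule conv_abs_bound[of _ _ "\<lambda>l. 1 / real p ^ l"])
    (use p_gt_1 in
      \<open>simp_all add: abs_power abs_of_nat_p power_one_over LIMSEQ_divide_realpow_zero\<close>)

lemma abs_log_term_le:
  "absp ((-1) ^ n * u ^ Suc n / of_nat (Suc n)) \<le> real (Suc n) * absp u ^ Suc n"
proof -
  have "absp ((-1) ^ n * u ^ Suc n / of_nat (Suc n)) = absp u ^ Suc n * absp (1 / of_nat (Suc n))"
    by (simp add: abs_divide mult abs_power)
  also have "\<dots> \<le> absp u ^ Suc n * real (Suc n)"
    by (intro mult_left_mono abs_inverse_of_nat_le) (simp_all add: nonneg)
  finally show ?thesis by (simp add: mult.commute)
qed

lemma conv_abs_logp:
  assumes "absp (r - 1) < 1"
  shows "conv_abs absp (\<lambda>N. \<Sum>n<N. (-1) ^ n * (r - 1) ^ (n + 1) / of_nat (n + 1)) (logp absp r)"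
proof -
  have lim: "(\<lambda>n. real (Suc n) ^ 2 * absp (r - 1) ^ Suc n) \<longlonglongrightarrow> 0"
    using tendsto_square_times_power_zero[OF nonneg assms] by (rule LIMSEQ_Suc)
  have bound: "absp ((-1) ^ n * (r - 1) ^ Suc n / of_nat (Suc n))
      \<le> real (Suc n) ^ 2 * absp (r - 1) ^ Suc n" for n
    using abs_log_term_le[of n "r - 1"]
    by (rule order_trans) (simp add: power2_eq_square mult_right_mono nonneg)
  have terms: "(\<lambda>n. absp ((-1) ^ n * (r - 1) ^ Suc n / of_nat (Suc n))) \<longlonglongrightarrow> 0"
    by (rule tendsto_sandwich[OF _ _ tendsto_const lim]; intro always_eventually allI nonneg bound)
  obtain L where L: "conv_abs absp (\<lambda>N. \<Sum>n<N. (-1) ^ n * (r - 1) ^ (n + 1) / of_nat (n + 1)) L"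
    using conv_abs_partial_sums[OF terms] unfolding Suc_eq_plus1 by blast
  then have "logp absp r = L"
    unfolding logp_def using conv_abs_unique by blast
  with L show ?thesis by simp
qed

lemma abs_prod_one_minus_ppow_le:
  assumes "n \<le> p ^ l"
  shows "absp ((\<Prod>i\<in>{1..n}. 1 - of_nat (p ^ l) / of_nat i) - 1) \<le> real n / real p ^ l"
proof (rule abs_prod_one_minus_le)
  fix i
  assume i: "i \<in> {1..n}"
  have "absp (of_nat (p ^ l) / of_nat i) = absp (of_nat (p ^ l)) * absp (1 / of_nat i)"
    by (simp add: abs_divide)
  also have "\<dots> \<le> 1 / real p ^ l * real i"
    unfolding abs_of_nat_ppow using i by (intro mult_left_mono abs_inverse_of_nat_le) auto
  also have "\<dots> \<le> real n / real p ^ l"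
    using i by (simp add: divide_right_mono)
  finally show "absp (of_nat (p ^ l) / of_nat i) \<le> real n / real p ^ l" .
qed (use assms p_gt_1 in \<open>simp_all add: field_simps flip: of_nat_power\<close>)

lemma abs_diff_quot_minus_log_sum_le:
  assumes C: "\<And>k. real k ^ 2 * absp u ^ k \<le> C"
  defines "a n \<equiv> (-1) ^ n * u ^ Suc n / of_nat (Suc n)"
  shows "absp (((1 + u) ^ p ^ l - 1) / of_nat (p ^ l) - (\<Sum>n<p ^ l. a n)) \<le> C / real p ^ l"
proof -
  have "((1 + u) ^ p ^ l - 1) / of_nat (p ^ l) =
      (\<Sum>n<p ^ l. a n * (\<Prod>i\<in>{1..n}. 1 - of_nat (p ^ l) / of_nat i))"
    using power_minus_one_div_eq_sum[of "p ^ l" u] p_gt_1 by (simp add: a_def)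
  then have "((1 + u) ^ p ^ l - 1) / of_nat (p ^ l) - (\<Sum>n<p ^ l. a n) =
      (\<Sum>n<p ^ l. a n * ((\<Prod>i\<in>{1..n}. 1 - of_nat (p ^ l) / of_nat i) - 1))"
    by (simp add: right_diff_distrib sum_subtractf)
  also have "absp \<dots> \<le> C / real p ^ l"
  proof (rule abs_sum_le)
    fix n
    assume n: "n \<in> {..<p ^ l}"
    have "absp (a n * ((\<Prod>i\<in>{1..n}. 1 - of_nat (p ^ l) / of_nat i) - 1))
        \<le> real (Suc n) * absp u ^ Suc n * (real n / real p ^ l)"
      unfolding mult a_def
      by (rule mult_mono[OF abs_log_term_le abs_prod_one_minus_ppow_le])
        (use n in \<open>simp_all add: nonneg\<close>)
    also have "\<dots> = real (Suc n) * real n * absp u ^ Suc n / real p ^ l"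
      by simp
    also have "\<dots> \<le> real (Suc n) ^ 2 * absp u ^ Suc n / real p ^ l"
      by (rule divide_right_mono[OF mult_right_mono]) (simp_all add: power2_eq_square nonneg)
    also have "\<dots> \<le> C / real p ^ l"
      by (rule divide_right_mono[OF C]) simp
    finally show "absp (a n * ((\<Prod>i\<in>{1..n}. 1 - of_nat (p ^ l) / of_nat i) - 1))
        \<le> C / real p ^ l" .
  qed (use C[of 0] in simp)
  finally show ?thesis .
qed

lemma conv_abs_power_ppow_diff_quot:
  assumes "absp (r - 1) < 1"
  shows "conv_abs absp (\<lambda>l. (r ^ p ^ l - 1) / of_nat (p ^ l)) (logp absp r)"
proof -
  define a where "a n = (-1) ^ n * (r - 1) ^ Suc n / of_nat (Suc n)" for n
  have "(\<lambda>k. real k ^ 2 * absp (r - 1) ^ k) \<longlonglongrightarrow> 0"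
    using tendsto_square_times_power_zero[OF nonneg assms] .
  then have "Bseq (\<lambda>k. real k ^ 2 * absp (r - 1) ^ k)"
    by (rule convergent_imp_Bseq[OF convergentI])
  then obtain C where C: "\<And>k. real k ^ 2 * absp (r - 1) ^ k \<le> C"
    unfolding Bseq_def by (metis abs_le_D1 real_norm_def)
  have "conv_abs absp (\<lambda>l. (r ^ p ^ l - 1) / of_nat (p ^ l) - (\<Sum>n<p ^ l. a n)) 0"
    by (rule conv_abs_bound[of _ _ "\<lambda>l. C / real p ^ l"])
      (use abs_diff_quot_minus_log_sum_le[OF C] p_gt_1 in
        \<open>simp_all add: a_def LIMSEQ_divide_realpow_zero\<close>)
  moreover have "conv_abs absp (\<lambda>l. \<Sum>n<p ^ l. a n) (logp absp r)"
    using conv_abs_subseq[OF conv_abs_logp[OF assms], of "\<lambda>l. p ^ l"] p_gt_1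
    unfolding a_def Suc_eq_plus1 by simp
  ultimately have "conv_abs absp
      (\<lambda>l. ((r ^ p ^ l - 1) / of_nat (p ^ l) - (\<Sum>n<p ^ l. a n)) + (\<Sum>n<p ^ l. a n))
      (0 + logp absp r)"
    by (rule conv_abs_add)
  then show ?thesis by simp
qed

lemma conv_fps_riemann_fps:
  assumes "absp (r - 1) < 1" "r \<noteq> 0"
  shows "conv_fps (\<lambda>l. riemann_fps (r powi h) (p ^ l))
    ((fps_const (of_int h * logp absp r) + fps_X) / (fps_const (r powi h) * fps_exp 1 - 1))"
proof -
  define Q where "Q = r powi h"
  have "conv_abs absp (\<lambda>l. ((r ^ p ^ l) powi h - 1) / of_nat (p ^ l)) (of_int h * logp absp r)"
    by (rule conv_abs_diff_quot_powi[OF conv_abs_power_ppow_diff_quot[OF assms(1)] conv_abs_ppow])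
      (use assms(2) p_gt_1 in simp_all)
  moreover have "(r ^ p ^ l) powi h = Q ^ p ^ l" for l
    by (simp add: Q_def power_int_power power_int_power' mult.commute)
  ultimately have "conv_fps (\<lambda>l. fps_const (1 / of_nat (p ^ l)) *
      (fps_const (Q ^ p ^ l) * fps_exp (of_nat (p ^ l)) - 1)) (fps_const (of_int h * logp absp r) + fps_X)"
    by (intro conv_fps_exp_diff_quot conv_abs_ppow) (use p_gt_1 in simp_all)
  then show ?thesis
    using assms(2) by (simp add: riemann_fps_eq_divide Q_def conv_fps_divide_right)
qed

end

theorem lemma3:
  fixes p d k :: nat and h :: int and q :: "'a::field_char_0"
    and absp :: "'a \<Rightarrow> real" and \<chi> :: "nat \<Rightarrow> 'a"
  assumes "prime p"
    and "is_Cp p absp"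
    and "absp (1 - q) < real p powr (- 1 / (real p - 1))"
    and "d > 0"
    and "has_conductor \<chi> d"
  shows "conv_abs absp (volk_sum p d \<chi> h q k)
           (of_nat d powi (int k - 1) *
             (\<Sum>i<d. \<chi> i * q powi (h * int i) *
                 hq_bernpoly absp h (q ^ d) k (of_nat i / of_nat d)))"
proof -
  interpret padic_abs absp p
    using assms(1,2) unfolding is_Cp_def by unfold_locales auto
  have periodic: "\<And>a. \<chi> (a + d) = \<chi> a"
    using assms(5) by (simp add: has_conductor_def dirichlet_char_def)
  have "real p powr (- 1 / (real p - 1)) < 1"
    using p_gt_1 by (intro powr_less_one) (auto simp: field_simps)
  with assms(3) have q: "absp (q - 1) < 1"
    by (simp add: abs_minus_commute)
  then have "q \<noteq> 0" by auto
  have "absp q \<le> 1"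
    using ultra[of "q - 1" 1] q by simp
  then have "absp (q ^ d - 1) < 1"
    using q by (rule order_le_less_trans[OF abs_power_minus_one_le])
  then have "conv_fps (\<lambda>l. riemann_fps ((q ^ d) powi h) (p ^ l) * fps_exp a)
      ((fps_const (of_int h * logp absp (q ^ d)) + fps_X) /
        (fps_const ((q ^ d) powi h) * fps_exp 1 - 1) * fps_exp a)" for a
    using \<open>q \<noteq> 0\<close> by (intro conv_fps_mult_right conv_fps_riemann_fps) simp_all
  then show ?thesis
    unfolding volk_sum_eq_riemann_fps[where \<chi> = \<chi>, OF assms(4) periodic \<open>q \<noteq> 0\<close>]
      hq_bernpoly_def conv_fps_def
    by (intro conv_abs_mult conv_abs_sum conv_abs_const) simp_all
qed

end
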